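(* Let $\Omega_M=\mathbb R^p$, $\mathcal H=\mathbb R$, and let $M$ be a random vector in $\mathbb R^p$ with invertible covariance matrix $\mathrm{var}(M)$. Let $V_I$ be a real random variable, and let $\kappa_M(m_1,m_2)=c+m_1^\top m_2$ for a constant $c$. Assume the moments and range conditions below hold, so that the weak conditional mean is defined. Then $$\mathbb E[V_I\,\|\,M=m]=\beta_0+\beta^\top(m-\mathbb EM),$$ where $\beta_0=\mathbb EV_I$ and $\beta^\top=\mathrm{cov}(V_I,M)\,[\mathrm{var}(M)]^{-1}$, with $\mathrm{cov}(V_I,M)\in\mathbb R^{1\times p}$.
   Context: Let $\mathcal M$ be the RKHS of $\kappa_M$, $\tau_M(m)=\kappa_M(\cdot,m)$, and $\mu_M=\mathbb E\tau_M(M)$. Define $\Sigma_{MM}=\mathbb E[(\tau_M(M)-\mu_M)\otimes(\tau_M(M)-\mu_M)]$ and $\Sigma_{MV}=\mathbb E[(\tau_M(M)-\mu_M)\otimes(V_I-\mathbb EV_I)]$, with $\Sigma_{VM}$ the adjoint of $\Sigma_{MV}$ and $(a\otimes b)h=\langle b,h\rangle a$. $\Sigma_{MM}^\dagger$ is the Moore–Penrose inverse. Assume $\mathbb E\kappa_M(M,M)<\infty$, $\mathbb E[\kappa_M(M,M)^{1/2}|V_I|]<\infty$, $\mathrm{ran}\Sigma_{MV}\subset\mathrm{ran}\Sigma_{MM}$, and that $\Sigma_{MM}^\dagger\Sigma_{MV}$ is bounded. The weak conditional mean of $V_I$ given $M$ is $\mathbb E[V_I\,\|\,M=m]=\mathbb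 EV_I+\lambda(m)-\mathbb E\lambda(M)$, where $\lambda(m)$ is the Riesz representer of $v\mapsto(\Sigma_{MM}^\dagger\Sigma_{MV}v)(m)$. Equivalently, $$\mathbb E[V_I\,\|\,M=m]=\mathbb EV_I+\Sigma_{VM}\Sigma_{MM}^\dagger(\tau_M(m)-\mu_M).$$ *)

theory Defs
  imports "HOL-Probability.Probability"
begin

text \<open>The RKHS of the kernel is represented abstractly by a real Hilbert space 'h together
with its canonical feature map tau, which reproduces the kernel and whose range spans a dense
subspace; this is the RKHS up to the isometry h \<mapsto> (\<lambda>m. inner h (tau m)).\<close>

definition is_rkhs_feature_map ::
  "('m \<Rightarrow> 'm \<Rightarrow> real) \<Rightarrow> ('m \<Rightarrow> 'h::real_inner) \<Rightarrow> bool" where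
  "is_rkhs_feature_map kappa tau \<longleftrightarrow>
     (\<forall>x y. inner (tau x) (tau y) = kappa x y) \<and> closure (span (range tau)) = UNIV"

definition mp_inv :: "('h::real_inner \<Rightarrow> 'h) \<Rightarrow> 'h \<Rightarrow> 'h" where
  "mp_inv A y = (THE x. A x = y \<and> (\<forall>z. A z = 0 \<longrightarrow> inner x z = 0))"

definition mean_emb ::
  "'a measure \<Rightarrow> ('m \<Rightarrow> 'h::{real_inner,complete_space,second_countable_topology})
     \<Rightarrow> ('a \<Rightarrow> 'm) \<Rightarrow> 'h" where
  "mean_emb P tau M = (\<integral>\<omega>. tau (M \<omega>) \<partial>P)"

definition cov_MM ::
  "'a measure \<Rightarrow> ('m \<Rightarrow> 'h::{real_inner,complete_space,second_countable_topology})
     \<Rightarrow> ('a \<Rightarrow> 'm) \<Rightarrow> 'h \<Rightarrow> 'h" where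
  "cov_MM P tau M h =
     (\<integral>\<omega>. inner (tau (M \<omega>) - mean_emb P tau M) h *\<^sub>R (tau (M \<omega>) - mean_emb P tau M) \<partial>P)"

definition cov_MV ::
  "'a measure \<Rightarrow> ('m \<Rightarrow> 'h::{real_inner,complete_space,second_countable_topology})
     \<Rightarrow> ('a \<Rightarrow> 'm) \<Rightarrow> ('a \<Rightarrow> real) \<Rightarrow> real \<Rightarrow> 'h" where
  "cov_MV P tau M V v =
     (\<integral>\<omega>. ((V \<omega> - (\<integral>\<omega>'. V \<omega>' \<partial>P)) * v) *\<^sub>R (tau (M \<omega>) - mean_emb P tau M) \<partial>P)"

text \<open>Weak conditional mean E[V || M = m] = E V + lambda(m) - E lambda(M), where (since the
value space is R) lambda(m) is the value at m of the RKHS function Sigma_MM^dagger Sigma_MV 1.\<close>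
definition weak_cond_mean ::
  "'a measure \<Rightarrow> ('m \<Rightarrow> 'h::{real_inner,complete_space,second_countable_topology})
     \<Rightarrow> ('a \<Rightarrow> 'm) \<Rightarrow> ('a \<Rightarrow> real) \<Rightarrow> 'm \<Rightarrow> real" where
  "weak_cond_mean P tau M V m =
     (let g = mp_inv (cov_MM P tau M) (cov_MV P tau M V 1);
          lam = (\<lambda>x. inner g (tau x))
      in (\<integral>\<omega>. V \<omega> \<partial>P) + lam m - (\<integral>\<omega>. lam (M \<omega>) \<partial>P))"

definition mean_vec :: "'a measure \<Rightarrow> ('a \<Rightarrow> real^'p) \<Rightarrow> real^'p" where
  "mean_vec P M = (\<chi> i. \<integral>\<omega>. M \<omega> $ i \<partial>P)"

definition var_mat :: "'a measure \<Rightarrow> ('a \<Rightarrow> real^'p) \<Rightarrow> real^'p^'p" where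
  "var_mat P M = (\<chi> i j. \<integral>\<omega>. (M \<omega> $ i - mean_vec P M $ i) * (M \<omega> $ j - mean_vec P M $ j) \<partial>P)"

text \<open>cov(V, M) as a row vector (element of R^p, multiplied from the left with v*).\<close>
definition cov_vec :: "'a measure \<Rightarrow> ('a \<Rightarrow> real) \<Rightarrow> ('a \<Rightarrow> real^'p) \<Rightarrow> real^'p" where
  "cov_vec P V M = (\<chi> j. \<integral>\<omega>. (V \<omega> - (\<integral>\<omega>'. V \<omega>' \<partial>P)) * (M \<omega> $ j - mean_vec P M $ j) \<partial>P)"

end

theory Submission
  imports Defs
begin

text \<open>For the kernel c + x \<bullet> y the feature map splits as tau x = tau 0 + L x with L a linear
isometry from R^p into the RKHS. Hence the centred features are tau (M) - E tau (M) = L (M - E M),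
so Sigma_MM = L var(M) L^* and Sigma_MV 1 = L cov(M, V). When var(M) is invertible,
L beta with beta = var(M)^-1 cov(M, V) solves Sigma_MM g = Sigma_MV 1, and it lies in the range of
the self-adjoint operator Sigma_MM, hence is orthogonal to its kernel: it is the Moore-Penrose
solution. Finally lambda(m) = inner (L beta) (tau m) = beta \<bullet> m.\<close>

lemma matrix_inv_left:
  fixes A :: "'a::semiring_1^'n^'m"
  assumes "invertible A"
  shows "matrix_inv A ** A = mat 1"
  using someI_ex[OF assms[unfolded invertible_def]] by (simp add: matrix_inv_def)

lemma inner_vector_matrix_symmetric:
  fixes A :: "real^'n^'n"
  assumes "transpose A = A"
  shows "(x v* A) \<bullet> y = (y v* A) \<bullet> x"
proof -
  have "(x v* A) \<bullet> y = (A *v y) \<bullet> x"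
    by (subst inner_commute) (rule dot_lmul_matrix)
  also have "\<dots> = (y v* transpose A) \<bullet> x"
    by (simp add: vector_transpose_matrix)
  finally show ?thesis
    using assms by simp
qed

lemma mp_inv_eqI:
  fixes A :: "'h::real_inner \<Rightarrow> 'h"
  assumes self_adjoint: "\<And>a b. inner (A a) b = inner a (A b)"
    and "A x = y" and "x \<in> range A"
  shows "mp_inv A y = x"
proof -
  have orth: "inner x z = 0" if "A z = 0" for z
  proof -
    obtain x0 where "x = A x0" using \<open>x \<in> range A\<close> by blast
    then show ?thesis using self_adjoint[of x0 z] that by simp
  qed
  have "x' = x" if x': "A x' = y" "\<forall>z. A z = 0 \<longrightarrow> inner x' z = 0" for x'
  proof -
    define w where "w = x' - x"
    have "inner (A w) (A w) = inner w (A (A w))" by (rule self_adjoint)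
    also have "\<dots> = inner x' (A (A w)) - inner x (A (A w))"
      unfolding w_def by (rule inner_diff_left)
    also have "\<dots> = inner (A x') (A w) - inner (A x) (A w)"
      by (simp only: self_adjoint)
    also have "\<dots> = 0" using x'(1) \<open>A x = y\<close> by simp
    finally have "A w = 0" by simp
    then have "inner x' w = 0" "inner x w = 0" using x'(2) orth by blast+
    then have "inner w w = 0" unfolding w_def by (simp add: inner_diff_left)
    then show ?thesis by (simp add: w_def)
  qed
  then show ?thesis
    unfolding mp_inv_def using \<open>A x = y\<close> orth by (intro the_equality) blast+
qed

lemma is_rkhs_feature_map_eqI:
  assumes "is_rkhs_feature_map kappa (tau :: 'm \<Rightarrow> 'h::real_inner)"
    and "\<And>z. inner a (tau z) = inner b (tau z)"
  shows "a = b"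
proof -
  have "range tau \<subseteq> {x. (a - b) \<bullet> x = 0}"
    using assms(2) by (auto simp: inner_diff_left)
  then have "span (range tau) \<subseteq> {x. (a - b) \<bullet> x = 0}"
    by (rule span_minimal[OF _ subspace_hyperplane])
  then have "closure (span (range tau)) \<subseteq> {x. (a - b) \<bullet> x = 0}"
    by (rule closure_minimal[OF _ closed_hyperplane])
  then have "(a - b) \<bullet> (a - b) = 0"
    using assms(1) unfolding is_rkhs_feature_map_def by blast
  then show ?thesis by simp
qed

lemma integrable_inner_scaleR_self:
  fixes X :: "'a \<Rightarrow> 'b::{real_inner,banach,second_countable_topology}"
  assumes [measurable]: "X \<in> borel_measurable P"
    and "integrable P (\<lambda>\<omega>. (norm (X \<omega>))\<^sup>2)"
  shows "integrable P (\<lambda>\<omega>. inner (X \<omega>) a *\<^sub>R X \<omega>)"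
proof (rule Bochner_Integration.integrable_bound)
  show "integrable P (\<lambda>\<omega>. norm a * (norm (X \<omega>))\<^sup>2)"
    using assms(2) by simp
  have "norm (inner (X \<omega>) a *\<^sub>R X \<omega>) \<le> norm a * (norm (X \<omega>))\<^sup>2" for \<omega>
  proof -
    have "norm (inner (X \<omega>) a *\<^sub>R X \<omega>) = norm (X \<omega>) * \<bar>inner (X \<omega>) a\<bar>"
      by simp
    also have "\<dots> \<le> norm (X \<omega>) * (norm (X \<omega>) * norm a)"
      by (intro mult_left_mono Cauchy_Schwarz_ineq2) simp
    finally show ?thesis by (simp add: power2_eq_square mult_ac)
  qed
  then show "AE \<omega> in P. norm (inner (X \<omega>) a *\<^sub>R X \<omega>) \<le> norm (norm a * (norm (X \<omega>))\<^sup>2)"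
    by (intro AE_I2) (simp add: abs_mult)
qed measurable

locale linear_kernel_feature_map =
  fixes c :: real and tau :: "'x::real_inner \<Rightarrow> 'h::real_inner"
  assumes feature_map: "is_rkhs_feature_map (\<lambda>x y. c + x \<bullet> y) tau"
begin

lemma inner_tau_tau: "inner (tau x) (tau y) = c + x \<bullet> y"
  using feature_map by (simp add: is_rkhs_feature_map_def)

lemma kernel_const_nonneg: "0 \<le> c"
  using inner_tau_tau[of 0 0] inner_ge_zero[of "tau 0"] by simp

definition lin_feature :: "'x \<Rightarrow> 'h" where
  "lin_feature x = tau x - tau 0"

lemma tau_eq_lin_feature: "tau x = tau 0 + lin_feature x"
  by (simp add: lin_feature_def)

lemma inner_lin_feature_tau [simp]: "inner (lin_feature x) (tau z) = x \<bullet> z"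
  by (simp add: lin_feature_def inner_diff_left inner_tau_tau)

lemma inner_lin_feature [simp]: "inner (lin_feature x) (lin_feature y) = x \<bullet> y"
  by (simp add: lin_feature_def [of y] inner_diff_right)

lemma norm_lin_feature [simp]: "norm (lin_feature x) = norm x"
  by (simp add: norm_eq_sqrt_inner)

lemma bounded_linear_lin_feature: "bounded_linear lin_feature"
proof (rule bounded_linear_intro[where K = 1])
  show "lin_feature (x + y) = lin_feature x + lin_feature y" for x y
    by (rule is_rkhs_feature_map_eqI[OF feature_map]) (simp add: inner_add_left)
  show "lin_feature (r *\<^sub>R x) = r *\<^sub>R lin_feature x" for r x
    by (rule is_rkhs_feature_map_eqI[OF feature_map]) simp
qed simp

lemmas linear_lin_feature = bounded_linear.linear[OF bounded_linear_lin_feature]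

end

locale linear_kernel_model =
  prob_space P + linear_kernel_feature_map c tau
  for P :: "'a measure" and c :: real
    and tau :: "real^'p \<Rightarrow> 'h::{real_inner,complete_space,second_countable_topology}" +
  fixes M :: "'a \<Rightarrow> real^'p" and V :: "'a \<Rightarrow> real"
  assumes M_measurable [measurable]: "M \<in> borel_measurable P"
    and V_measurable [measurable]: "V \<in> borel_measurable P"
    and integrable_V: "integrable P V"
    and integrable_kernel_diag: "integrable P (\<lambda>\<omega>. c + M \<omega> \<bullet> M \<omega>)"
    and integrable_norm_tau_V: "integrable P (\<lambda>\<omega>. sqrt (c + M \<omega> \<bullet> M \<omega>) * \<bar>V \<omega>\<bar>)"
begin

definition M_centered :: "'a \<Rightarrow> real^'p" where
  "M_centered \<omega> = M \<omega> - mean_vec P M"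

lemma M_centered_measurable [measurable]: "M_centered \<in> borel_measurable P"
  unfolding M_centered_def by measurable

lemma M_centered_nth: "M_centered \<omega> $ i = M \<omega> $ i - mean_vec P M $ i"
  by (simp add: M_centered_def)

lemma integrable_inner_M: "integrable P (\<lambda>\<omega>. M \<omega> \<bullet> M \<omega>)"
  using Bochner_Integration.integrable_diff[OF integrable_kernel_diag integrable_const[of c]]
  by simp

lemma integrable_M: "integrable P M"
proof -
  have "integrable P (\<lambda>\<omega>. norm (M \<omega>))"
    by (rule square_integrable_imp_integrable) (simp_all add: power2_norm_eq_inner integrable_inner_M)
  then show ?thesis by (simp add: integrable_norm_iff)
qed

lemma integral_M: "(\<integral>\<omega>. M \<omega> \<partial>P) = mean_vec P M"
  by (simp add: vec_eq_iff mean_vec_def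
      integral_bounded_linear[OF bounded_linear_vec_nth integrable_M, symmetric])

lemma integrable_sq_norm_M_centered: "integrable P (\<lambda>\<omega>. (norm (M_centered \<omega>))\<^sup>2)"
proof -
  let ?\<mu> = "mean_vec P M"
  have "(norm (M_centered \<omega>))\<^sup>2 = M \<omega> \<bullet> M \<omega> - 2 * (?\<mu> \<bullet> M \<omega>) + ?\<mu> \<bullet> ?\<mu>" for \<omega>
    by (simp add: M_centered_def power2_norm_eq_inner inner_diff inner_commute)
  then show ?thesis
    using integrable_inner_M integrable_M by simp
qed

lemmas integrable_inner_scaleR_M_centered =
  integrable_inner_scaleR_self[OF M_centered_measurable integrable_sq_norm_M_centered]

lemma integrable_M_centered_products: "integrable P (\<lambda>\<omega>. M_centered \<omega> $ i * M_centered \<omega> $ j)"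
  using integrable_bounded_linear[OF bounded_linear_vec_nth[of j]
      integrable_inner_scaleR_M_centered[of "axis i 1"]]
  by (simp add: inner_axis)

lemma var_mat_nth: "var_mat P M $ i $ j = (\<integral>\<omega>. M_centered \<omega> $ i * M_centered \<omega> $ j \<partial>P)"
  by (simp add: var_mat_def M_centered_nth)

lemma integral_inner_scaleR_M_centered:
  "(\<integral>\<omega>. (M_centered \<omega> \<bullet> w) *\<^sub>R M_centered \<omega> \<partial>P) = w v* var_mat P M"
proof (rule iffD2[OF vec_eq_iff], rule allI)
  fix j
  have "(\<integral>\<omega>. (M_centered \<omega> \<bullet> w) *\<^sub>R M_centered \<omega> \<partial>P) $ j
      = (\<integral>\<omega>. (\<Sum>i\<in>UNIV. w $ i * (M_centered \<omega> $ i * M_centered \<omega> $ j)) \<partial>P)"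
    unfolding integral_bounded_linear[OF bounded_linear_vec_nth
        integrable_inner_scaleR_M_centered, symmetric]
    by (intro Bochner_Integration.integral_cong refl)
      (simp add: inner_vec_def sum_distrib_right mult.assoc mult.left_commute)
  also have "\<dots> = (\<Sum>i\<in>UNIV. w $ i * var_mat P M $ i $ j)"
    by (simp add: var_mat_nth integrable_M_centered_products)
  also have "\<dots> = (w v* var_mat P M) $ j"
    by (simp add: vector_matrix_mult_def mult.commute)
  finally show "(\<integral>\<omega>. (M_centered \<omega> \<bullet> w) *\<^sub>R M_centered \<omega> \<partial>P) $ j = (w v* var_mat P M) $ j" .
qed

lemma integrable_V_scaleR_M: "integrable P (\<lambda>\<omega>. V \<omega> *\<^sub>R M \<omega>)"
proof (rule Bochner_Integration.integrable_bound[OF integrable_norm_tau_V])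
  have "norm (V \<omega> *\<^sub>R M \<omega>) \<le> sqrt (c + M \<omega> \<bullet> M \<omega>) * \<bar>V \<omega>\<bar>" for \<omega>
  proof -
    have "norm (M \<omega>) \<le> sqrt (c + M \<omega> \<bullet> M \<omega>)"
      using kernel_const_nonneg by (simp add: norm_eq_sqrt_inner)
    then show ?thesis by (simp add: mult_left_mono mult.commute)
  qed
  moreover have "0 \<le> c + M \<omega> \<bullet> M \<omega>" for \<omega>
    using kernel_const_nonneg by simp
  ultimately show "AE \<omega> in P. norm (V \<omega> *\<^sub>R M \<omega>) \<le> norm (sqrt (c + M \<omega> \<bullet> M \<omega>) * \<bar>V \<omega>\<bar>)"
    by (intro AE_I2) (simp add: abs_mult)
qed measurable

lemma integrable_V_scaleR_M_centered:
  "integrable P (\<lambda>\<omega>. (V \<omega> - expectation V) *\<^sub>R M_centered \<omega>)"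
proof -
  let ?\<mu> = "mean_vec P M" and ?EV = "expectation V"
  have "(V \<omega> - ?EV) *\<^sub>R M_centered \<omega> = V \<omega> *\<^sub>R M \<omega> - (V \<omega> *\<^sub>R ?\<mu> + ?EV *\<^sub>R M \<omega>) + ?EV *\<^sub>R ?\<mu>"
    for \<omega>
    by (simp add: M_centered_def algebra_simps)
  then show ?thesis
    using integrable_V_scaleR_M integrable_V integrable_M by simp
qed

lemma integral_V_scaleR_M_centered:
  "(\<integral>\<omega>. (V \<omega> - expectation V) *\<^sub>R M_centered \<omega> \<partial>P) = cov_vec P V M"
  by (simp add: vec_eq_iff cov_vec_def M_centered_nth
      integral_bounded_linear[OF bounded_linear_vec_nth integrable_V_scaleR_M_centered, symmetric])

definition lin_adjoint :: "'h \<Rightarrow> real^'p" where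
  "lin_adjoint a = (\<chi> i. inner (lin_feature (axis i 1)) a)"

lemma inner_lin_feature_left: "inner (lin_feature x) a = x \<bullet> lin_adjoint a"
proof -
  have "x = (\<Sum>i\<in>UNIV. x $ i *\<^sub>R axis i 1)"
    using basis_expansion[of x] by (simp add: scalar_mult_eq_scaleR)
  then have "lin_feature x = lin_feature (\<Sum>i\<in>UNIV. x $ i *\<^sub>R axis i 1)"
    by (rule arg_cong)
  also have "\<dots> = (\<Sum>i\<in>UNIV. x $ i *\<^sub>R lin_feature (axis i 1))"
    by (simp add: linear_sum[OF linear_lin_feature] linear_scale[OF linear_lin_feature])
  finally show ?thesis
    by (simp add: lin_adjoint_def inner_vec_def inner_sum_left)
qed

lemma lin_adjoint_lin_feature: "lin_adjoint (lin_feature w) = w"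
  by (simp add: lin_adjoint_def vec_eq_iff inner_axis')

lemma mean_emb_eq: "mean_emb P tau M = tau 0 + lin_feature (mean_vec P M)"
proof -
  have "mean_emb P tau M = (\<integral>\<omega>. tau 0 + lin_feature (M \<omega>) \<partial>P)"
    unfolding mean_emb_def by (simp add: tau_eq_lin_feature[of "M _"])
  also have "\<dots> = tau 0 + lin_feature (mean_vec P M)"
    \<comment> \<open>the sort of 'h does not entail banach, so lebesgue_integral_const is not available\<close>
    using integral_scaleR_left[of "tau 0" P "\<lambda>_. 1"]
      integrable_bounded_linear[OF bounded_linear_lin_feature integrable_M]
    by (simp add: integral_M integral_bounded_linear[OF bounded_linear_lin_feature integrable_M]
        prob_space)
  finally show ?thesis .
qed

lemma tau_M_minus_mean_emb: "tau (M \<omega>) - mean_emb P tau M = lin_feature (M_centered \<omega>)"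
  by (simp add: mean_emb_eq M_centered_def tau_eq_lin_feature[of "M \<omega>"]
      linear_diff[OF linear_lin_feature])

lemma transpose_var_mat: "transpose (var_mat P M) = var_mat P M"
  by (simp add: transpose_def var_mat_def vec_eq_iff mult.commute)

lemma cov_MM_eq: "cov_MM P tau M a = lin_feature (lin_adjoint a v* var_mat P M)"
proof -
  have "cov_MM P tau M a
      = (\<integral>\<omega>. lin_feature ((M_centered \<omega> \<bullet> lin_adjoint a) *\<^sub>R M_centered \<omega>) \<partial>P)"
    by (simp add: cov_MM_def tau_M_minus_mean_emb inner_lin_feature_left
        linear_scale[OF linear_lin_feature])
  also have "\<dots> = lin_feature (lin_adjoint a v* var_mat P M)"
    by (simp add: integral_bounded_linear[OF bounded_linear_lin_feature
          integrable_inner_scaleR_M_centered] integral_inner_scaleR_M_centered)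
  finally show ?thesis .
qed

lemma cov_MM_lin_feature: "cov_MM P tau M (lin_feature w) = lin_feature (w v* var_mat P M)"
  by (simp add: cov_MM_eq lin_adjoint_lin_feature)

lemma cov_MM_self_adjoint: "inner (cov_MM P tau M a) b = inner a (cov_MM P tau M b)"
proof -
  have "inner (cov_MM P tau M a) b = (lin_adjoint a v* var_mat P M) \<bullet> lin_adjoint b"
    by (simp add: cov_MM_eq inner_lin_feature_left)
  also have "\<dots> = (lin_adjoint b v* var_mat P M) \<bullet> lin_adjoint a"
    using transpose_var_mat by (rule inner_vector_matrix_symmetric)
  also have "\<dots> = inner (cov_MM P tau M b) a"
    by (simp add: cov_MM_eq inner_lin_feature_left)
  also have "\<dots> = inner a (cov_MM P tau M b)"
    by (rule inner_commute)
  finally show ?thesis .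
qed

lemma cov_MV_one: "cov_MV P tau M V 1 = lin_feature (cov_vec P V M)"
proof -
  have "cov_MV P tau M V 1
      = (\<integral>\<omega>. lin_feature ((V \<omega> - expectation V) *\<^sub>R M_centered \<omega>) \<partial>P)"
    by (simp add: cov_MV_def tau_M_minus_mean_emb linear_scale[OF linear_lin_feature])
  also have "\<dots> = lin_feature (cov_vec P V M)"
    by (simp add: integral_bounded_linear[OF bounded_linear_lin_feature
          integrable_V_scaleR_M_centered] integral_V_scaleR_M_centered)
  finally show ?thesis .
qed

lemma mp_inv_cov_MM_cov_MV:
  assumes "invertible (var_mat P M)"
  shows "mp_inv (cov_MM P tau M) (cov_MV P tau M V 1)
           = lin_feature (cov_vec P V M v* matrix_inv (var_mat P M))"
proof (rule mp_inv_eqI[OF cov_MM_self_adjoint])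
  have inv: "x v* matrix_inv (var_mat P M) v* var_mat P M = x" for x :: "real^'p"
    by (simp add: vector_matrix_mul_assoc matrix_inv_left[OF assms])
  show "cov_MM P tau M (lin_feature (cov_vec P V M v* matrix_inv (var_mat P M)))
      = cov_MV P tau M V 1"
    by (simp add: cov_MM_lin_feature cov_MV_one inv)
  show "lin_feature (cov_vec P V M v* matrix_inv (var_mat P M)) \<in> range (cov_MM P tau M)"
    by (rule range_eqI[of _ _ "lin_feature (cov_vec P V M v* matrix_inv (var_mat P M)
          v* matrix_inv (var_mat P M))"]) (simp add: cov_MM_lin_feature inv)
qed

lemma weak_cond_mean_eq:
  assumes "invertible (var_mat P M)"
  shows "weak_cond_mean P tau M V m
           = expectation V + (cov_vec P V M v* matrix_inv (var_mat P M)) \<bullet> (m - mean_vec P M)"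
  by (simp add: weak_cond_mean_def mp_inv_cov_MM_cov_MV[OF assms] integrable_M integral_M
      inner_diff_right)

end

theorem proposition2:
  fixes P :: "'a measure" and M :: "'a \<Rightarrow> real^'p" and V :: "'a \<Rightarrow> real"
    and c :: real
    and tau :: "real^'p \<Rightarrow> 'h::{real_inner,complete_space,second_countable_topology}"
  assumes "prob_space P"
    and "M \<in> borel_measurable P" and "V \<in> borel_measurable P"
    and "is_rkhs_feature_map (\<lambda>m1 m2. c + m1 \<bullet> m2) tau"
    and "invertible (var_mat P M)"
    and "integrable P V"
    and "integrable P (\<lambda>\<omega>. c + M \<omega> \<bullet> M \<omega>)"
    and "integrable P (\<lambda>\<omega>. sqrt (c + M \<omega> \<bullet> M \<omega>) * \<bar>V \<omega>\<bar>)"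
    and "range (cov_MV P tau M V) \<subseteq> range (cov_MM P tau M)"
    and "bounded_linear (\<lambda>v. mp_inv (cov_MM P tau M) (cov_MV P tau M V v))"
  shows "\<forall>m. weak_cond_mean P tau M V m =
           (\<integral>\<omega>. V \<omega> \<partial>P) + (cov_vec P V M v* matrix_inv (var_mat P M)) \<bullet> (m - mean_vec P M)"
proof -
  interpret linear_kernel_model P c tau M V
    using assms(1-4,6-8)
    by (intro linear_kernel_model.intro linear_kernel_feature_map.intro
        linear_kernel_model_axioms.intro) auto
  show ?thesis
    using weak_cond_mean_eq[OF assms(5)] by simp
qed

end
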